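(* Consider the system $\frac{dT}{dt}=s+r_TT\left(1-\frac{T+I}{T_{\max}}\right)-dT-\frac{bTV}{T+I}$, $\frac{dI}{dt}=r_II\left(1-\frac{T+I}{T_{\max}}\right)+\frac{bTV}{T+I}-\delta I$, $\frac{dV}{dt}=\rho R^*I-cV-\frac{bTV}{T+I}$, with $\rho$ as bifurcation parameter. There exist parameter values for which $\delta>r_I(1-p_0/T_{\max})$, ${\cal R}_0=1$, zero is a simple eigenvalue of the Jacobian at the DFE with all other eigenvalues having negative real parts, $b_{VW}>0$ and $a>0$; and there exist parameter values for which the same hold but with $a<0$. Thus the system exhibits both backward and forward bifurcations.
   Context: Parameters $s,r_T,T_{\max},d,b,r_I,\delta,\rho,R^*,c$ are positive constants. Let $p_0=\left(r_T-d+\sqrt{(r_T-d)^2+\frac{4sr_T}{T_{\max}}}\right)\frac{T_{\max}}{2r_T}$, $a_{11}=\sqrt{(r_T-d)^2+\frac{4sr_T}{T_{\max}}}$, $a_{12}=\frac{p_0r_T}{T_{\max}}$. The disease-free equilibrium (DFE) is $x_0=(T,I,V)=(p_0,0,0)$ (independent of $\rho$); $I,V$ are the infected variables. For $\delta>r_I(1-p_0/T_{\max})$, ${\cal R}_0=\frac{b\rho R^*}{(b+c)\left(\delta-r_I(1-\frac{p_0}{T_{\max}})\right)}$. Ordering variables as $(T,I,V)$ and writing $f=(f_1,f_2,f_3)$ for the right-hand side, let $v=(0,b+c,b)$ and $w=(-a_{12}(b+c)-b\rho R^*,\,a_{11}(b+c),\,a_{11}\rho R^* )$ (left and right null vectors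 of the Jacobian at the DFE when ${\cal R}_0=1$). Define $a=\frac12\sum_{i,j,k}v_iw_jw_k\frac{\partial^2f_i}{\partial x_j\partial x_k}(x_0)$ and $b_{VW}=\sum_{i,j}v_iw_j\frac{\partial^2f_i}{\partial x_j\partial\rho}(x_0)$ (van den Driessche–Watmough coefficients; $a>0,b_{VW}>0$ indicates a backward bifurcation and $a<0,b_{VW}>0$ a forward bifurcation at ${\cal R}_0=1$). *)

theory Defs
  imports "HOL-Analysis.Derivative" "Jordan_Normal_Form.Char_Poly"
begin

record par =
  p_s :: real
  p_rT :: real
  p_Tmax :: real
  p_d :: real
  p_b :: real
  p_rI :: real
  p_delta :: real
  p_rho :: real
  p_Rstar :: real
  p_c :: real

definition par_pos :: "par \<Rightarrow> bool" where
  "par_pos P \<longleftrightarrow> p_s P > 0 \<and> p_rT P > 0 \<and> p_Tmax P > 0 \<and> p_d P > 0 \<and> p_b P > 0 \<and>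
     p_rI P > 0 \<and> p_delta P > 0 \<and> p_rho P > 0 \<and> p_Rstar P > 0 \<and> p_c P > 0"

definition rhs :: "par \<Rightarrow> nat \<Rightarrow> (nat \<Rightarrow> real) \<Rightarrow> real" where
  "rhs P i x = (let T = x 0; I = x 1; V = x 2 in
     if i = 0 then p_s P + p_rT P * T * (1 - (T + I) / p_Tmax P) - p_d P * T
                   - p_b P * T * V / (T + I)
     else if i = 1 then p_rI P * I * (1 - (T + I) / p_Tmax P) + p_b P * T * V / (T + I)
                   - p_delta P * I
     else p_rho P * p_Rstar P * I - p_c P * V - p_b P * T * V / (T + I))"

definition a11 :: "par \<Rightarrow> real" where
  "a11 P = sqrt ((p_rT P - p_d P)^2 + 4 * p_s P * p_rT P / p_Tmax P)"

definition p0 :: "par \<Rightarrow> real" where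
  "p0 P = (p_rT P - p_d P + a11 P) * p_Tmax P / (2 * p_rT P)"

definition a12 :: "par \<Rightarrow> real" where
  "a12 P = p0 P * p_rT P / p_Tmax P"

definition R0 :: "par \<Rightarrow> real" where
  "R0 P = p_b P * p_rho P * p_Rstar P /
     ((p_b P + p_c P) * (p_delta P - p_rI P * (1 - p0 P / p_Tmax P)))"

definition dfe :: "par \<Rightarrow> nat \<Rightarrow> real" where
  "dfe P k = (if k = 0 then p0 P else 0)"

definition unitv :: "nat \<Rightarrow> nat \<Rightarrow> real" where
  "unitv j k = (if k = j then 1 else 0)"

definition d1 :: "par \<Rightarrow> nat \<Rightarrow> nat \<Rightarrow> real" where
  "d1 P i j = deriv (\<lambda>t. rhs P i (\<lambda>l. dfe P l + t * unitv j l)) 0"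

definition d2 :: "par \<Rightarrow> nat \<Rightarrow> nat \<Rightarrow> nat \<Rightarrow> real" where
  "d2 P i j k = deriv (\<lambda>\<sigma>. deriv (\<lambda>t. rhs P i (\<lambda>l. dfe P l + \<sigma> * unitv k l + t * unitv j l)) 0) 0"

text \<open>Mixed second derivative of f_i w.r.t. x_j and rho at the DFE (the DFE does not depend on rho).\<close>
definition d2rho :: "par \<Rightarrow> nat \<Rightarrow> nat \<Rightarrow> real" where
  "d2rho P i j = deriv (\<lambda>r. deriv (\<lambda>t. rhs (P\<lparr>p_rho := r\<rparr>) i (\<lambda>l. dfe P l + t * unitv j l)) 0) (p_rho P)"

text \<open>Jacobian at the DFE (3x3), as a complex matrix for spectral statements.\<close>
definition jac :: "par \<Rightarrow> complex mat" where
  "jac P = mat 3 3 (\<lambda>(i, j). complex_of_real (d1 P i j))"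

definition vvec :: "par \<Rightarrow> nat \<Rightarrow> real" where
  "vvec P i = (if i = 0 then 0 else if i = 1 then p_b P + p_c P else p_b P)"

definition wvec :: "par \<Rightarrow> nat \<Rightarrow> real" where
  "wvec P i = (if i = 0 then - a12 P * (p_b P + p_c P) - p_b P * p_rho P * p_Rstar P
               else if i = 1 then a11 P * (p_b P + p_c P)
               else a11 P * p_rho P * p_Rstar P)"

definition coef_a :: "par \<Rightarrow> real" where
  "coef_a P = 1/2 * (\<Sum>i<3. \<Sum>j<3. \<Sum>k<3. vvec P i * wvec P j * wvec P k * d2 P i j k)"

definition coef_b :: "par \<Rightarrow> real" where
  "coef_b P = (\<Sum>i<3. \<Sum>j<3. vvec P i * wvec P j * d2rho P i j)"

definition spectral_cond :: "par \<Rightarrow> bool" where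
  "spectral_cond P \<longleftrightarrow> order 0 (char_poly (jac P)) = 1 \<and>
     (\<forall>z. poly (char_poly (jac P)) z = 0 \<longrightarrow> z \<noteq> 0 \<longrightarrow> Re z < 0)"

definition bif_hyps :: "par \<Rightarrow> bool" where
  "bif_hyps P \<longleftrightarrow> par_pos P \<and> p_delta P > p_rI P * (1 - p0 P / p_Tmax P) \<and> R0 P = 1 \<and>
     spectral_cond P \<and> coef_b P > 0"

end

theory Submission
  imports Defs
begin

(* At the DFE the infected equations do not depend on T to first order, so the Jacobian is
   block upper triangular: its T-eigenvalue is r_T (1 - 2 p0/T_max) - d = -a11 < 0, and the
   infected 2x2 block has negative trace and determinant
   (b + c)(delta - r_I (1 - p0/T_max)) - b rho R*, which vanishes exactly when R0 = 1.
   Hence 0 is a simple eigenvalue and the other two are negative.  Only f_V depends on rho, which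
   gives b_VW = b R* w_I > 0.  The second derivatives of f_I and f_V at the DFE come from the
   logistic term of f_I and from the incidence T V/(T + I), whose Hessian there is
   -(e_I e_V^T + e_V e_I^T)/p0; this yields
     a = -(b + c) r_I w_I (w_T + w_I)/T_max - b c w_I w_V/p0.
   In a family with R0 = 1 and w_T + w_I < 0 fixed, the first term grows linearly in r_I,
   so a takes both signs. *)

definition incidence_dir :: "(nat \<Rightarrow> real) \<Rightarrow> (nat \<Rightarrow> real) \<Rightarrow> real" where
  "incidence_dir x u =
     ((u 0 * x 2 + x 0 * u 2) * (x 0 + x 1) - x 0 * x 2 * (u 0 + u 1)) / (x 0 + x 1)\<^sup>2"

definition rhs_dir :: "par \<Rightarrow> nat \<Rightarrow> (nat \<Rightarrow> real) \<Rightarrow> (nat \<Rightarrow> real) \<Rightarrow> real" where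
  "rhs_dir P i x u =
     (if i = 0 then p_rT P * u 0 * (1 - (x 0 + x 1) / p_Tmax P) - p_rT P * x 0 * (u 0 + u 1) / p_Tmax P
                    - p_d P * u 0 - p_b P * incidence_dir x u
      else if i = 1 then p_rI P * u 1 * (1 - (x 0 + x 1) / p_Tmax P) - p_rI P * x 1 * (u 0 + u 1) / p_Tmax P
                    + p_b P * incidence_dir x u - p_delta P * u 1
      else p_rho P * p_Rstar P * u 1 - p_c P * u 2 - p_b P * incidence_dir x u)"

definition rhs_hess_dfe :: "par \<Rightarrow> nat \<Rightarrow> (nat \<Rightarrow> real) \<Rightarrow> (nat \<Rightarrow> real) \<Rightarrow> real" where
  "rhs_hess_dfe P i u w =
     (let q = (u 1 * w 2 + u 2 * w 1) / p0 P in
      if i = 0 then - p_rT P * (u 0 * (w 0 + w 1) + w 0 * (u 0 + u 1)) / p_Tmax P + p_b P * q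
      else if i = 1 then - p_rI P * (u 1 * (w 0 + w 1) + w 1 * (u 0 + u 1)) / p_Tmax P - p_b P * q
      else p_b P * q)"

definition infected_decay :: "par \<Rightarrow> real" where
  "infected_decay P = p_delta P - p_rI P * (1 - p0 P / p_Tmax P)"

lemma dfe_simps [simp]: "dfe P 0 = p0 P" "dfe P (Suc 0) = 0" "dfe P 2 = 0"
  by (simp_all add: dfe_def)

lemma rhs_has_dir_deriv:
  assumes "x 0 + x 1 \<noteq> 0" "p_Tmax P \<noteq> 0"
  shows "((\<lambda>t. rhs P i (\<lambda>l. x l + t * u l)) has_real_derivative rhs_dir P i x u) (at 0)"
  using assms
  unfolding rhs_def rhs_dir_def incidence_dir_def Let_def
  by (auto intro!: derivative_eq_intros simp: power2_eq_square field_simps)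

lemma incidence_dir_has_deriv_at_dfe:
  assumes "p0 P \<noteq> 0"
  shows "((\<lambda>s. incidence_dir (\<lambda>l. dfe P l + s * w l) u) has_real_derivative
           - (u 1 * w 2 + u 2 * w 1) / p0 P) (at 0)"
  using assms
  unfolding incidence_dir_def dfe_def
  by (auto intro!: derivative_eq_intros simp: power2_eq_square field_simps)

lemma rhs_dir_has_deriv_at_dfe:
  assumes "p0 P \<noteq> 0" "p_Tmax P \<noteq> 0"
  shows "((\<lambda>s. rhs_dir P i (\<lambda>l. dfe P l + s * w l) u) has_real_derivative rhs_hess_dfe P i u w) (at 0)"
  using assms
  unfolding rhs_dir_def rhs_hess_dfe_def Let_def
  by (auto intro!: derivative_eq_intros incidence_dir_has_deriv_at_dfe simp: field_simps)

lemma deriv_deriv_eqI: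
  fixes g :: "real \<Rightarrow> real \<Rightarrow> real"
  assumes "\<forall>\<^sub>F s in nhds 0. (g s has_real_derivative G s) (at 0)"
    and "(G has_real_derivative D) (at 0)"
  shows "deriv (\<lambda>s. deriv (g s) 0) 0 = D"
proof -
  have "\<forall>\<^sub>F s in nhds 0. G s = deriv (g s) 0"
    using assms(1) by eventually_elim (simp add: DERIV_imp_deriv)
  then show ?thesis
    using assms(2) by (simp add: DERIV_imp_deriv DERIV_cong_ev)
qed

lemma eventually_dfe_line_nonzero:
  assumes "p0 P \<noteq> 0"
  shows "\<forall>\<^sub>F s in nhds 0. dfe P 0 + s * w 0 + (dfe P 1 + s * w 1) \<noteq> 0"
proof -
  have "((\<lambda>s. p0 P + s * (w 0 + w 1)) \<longlongrightarrow> p0 P + 0 * (w 0 + w 1)) (nhds 0)"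
    by (intro tendsto_intros filterlim_ident)
  then have "\<forall>\<^sub>F s in nhds 0. p0 P + s * (w 0 + w 1) \<noteq> 0"
    using assms by (intro tendsto_imp_eventually_ne) auto
  then show ?thesis
    by eventually_elim (simp add: algebra_simps)
qed

lemma d1_eq_rhs_dir:
  "p0 P \<noteq> 0 \<Longrightarrow> p_Tmax P \<noteq> 0 \<Longrightarrow> d1 P i j = rhs_dir P i (dfe P) (unitv j)"
  unfolding d1_def by (intro DERIV_imp_deriv rhs_has_dir_deriv) simp_all

lemma d2_eq_rhs_hess_dfe:
  assumes "p0 P \<noteq> 0" "p_Tmax P \<noteq> 0"
  shows "d2 P i j k = rhs_hess_dfe P i (unitv j) (unitv k)"
  unfolding d2_def
proof (rule deriv_deriv_eqI)
  show "\<forall>\<^sub>F s in nhds 0. ((\<lambda>t. rhs P i (\<lambda>l. dfe P l + s * unitv k l + t * unitv j l))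
          has_real_derivative rhs_dir P i (\<lambda>l. dfe P l + s * unitv k l) (unitv j)) (at 0)"
    using eventually_dfe_line_nonzero[OF assms(1), of "unitv k"]
    by eventually_elim (rule rhs_has_dir_deriv[OF _ assms(2)])
  show "((\<lambda>s. rhs_dir P i (\<lambda>l. dfe P l + s * unitv k l) (unitv j)) has_real_derivative
          rhs_hess_dfe P i (unitv j) (unitv k)) (at 0)"
    using assms by (rule rhs_dir_has_deriv_at_dfe)
qed

lemma d2rho_eq:
  assumes "p0 P \<noteq> 0" "p_Tmax P \<noteq> 0"
  shows "d2rho P i j = (if i \<le> 1 then 0 else p_Rstar P * unitv j 1)"
proof -
  have "deriv (\<lambda>t. rhs (P\<lparr>p_rho := r\<rparr>) i (\<lambda>l. dfe P l + t * unitv j l)) 0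
          = rhs_dir (P\<lparr>p_rho := r\<rparr>) i (dfe P) (unitv j)" for r
    using assms by (intro DERIV_imp_deriv rhs_has_dir_deriv) simp_all
  moreover have "((\<lambda>r. rhs_dir (P\<lparr>p_rho := r\<rparr>) i (dfe P) (unitv j)) has_real_derivative
      (if i \<le> 1 then 0 else p_Rstar P * unitv j 1)) (at (p_rho P))"
  proof (cases "i \<le> 1")
    case True
    then have "(\<lambda>r. rhs_dir (P\<lparr>p_rho := r\<rparr>) i (dfe P) (unitv j)) = (\<lambda>_. rhs_dir P i (dfe P) (unitv j))"
      by (auto simp: rhs_dir_def)
    with True show ?thesis by simp
  next
    case False
    then show ?thesis by (auto simp: rhs_dir_def intro!: derivative_eq_intros)
  qed
  ultimately show ?thesis
    unfolding d2rho_def by (simp add: DERIV_imp_deriv)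
qed

lemma rhs_dir_dfe:
  assumes "p0 P \<noteq> 0"
  shows "rhs_dir P i (dfe P) u =
     (if i = 0 then p_rT P * u 0 * (1 - p0 P / p_Tmax P) - p_rT P * p0 P * (u 0 + u 1) / p_Tmax P
                    - p_d P * u 0 - p_b P * u 2
      else if i = 1 then p_rI P * u 1 * (1 - p0 P / p_Tmax P) + p_b P * u 2 - p_delta P * u 1
      else p_rho P * p_Rstar P * u 1 - p_c P * u 2 - p_b P * u 2)"
  using assms by (simp add: rhs_dir_def incidence_dir_def power2_eq_square)

lemma rT_p0_eq_minus_a11:
  assumes "p_rT P \<noteq> 0" "p_Tmax P \<noteq> 0"
  shows "p_rT P * (1 - 2 * p0 P / p_Tmax P) - p_d P = - a11 P"
  using assms by (simp add: p0_def field_simps)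

lemma d1_entries:
  assumes "p0 P \<noteq> 0" "p_Tmax P \<noteq> 0" "p_rT P \<noteq> 0"
  shows "d1 P 0 0 = - a11 P" "d1 P 1 0 = 0" "d1 P 2 0 = 0"
    "d1 P 1 1 = - infected_decay P" "d1 P 1 2 = p_b P"
    "d1 P 2 1 = p_rho P * p_Rstar P" "d1 P 2 2 = - (p_b P + p_c P)"
  using assms rT_p0_eq_minus_a11[of P]
  by (simp_all add: d1_eq_rhs_dir rhs_dir_dfe unitv_def infected_decay_def algebra_simps)

lemma char_poly_2x2:
  fixes A :: "'a :: comm_ring_1 mat"
  assumes "A \<in> carrier_mat 2 2"
  shows "char_poly A = [:A $$ (0,0) * A $$ (1,1) - A $$ (0,1) * A $$ (1,0), - (A $$ (0,0) + A $$ (1,1)), 1:]"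
proof -
  have "char_poly_matrix A \<in> carrier_mat 2 2"
    using assms by (simp add: char_poly_matrix_def)
  then show ?thesis
    using assms unfolding char_poly_def
    by (subst laplace_expansion_column[of _ 2 0])
      (auto simp: cofactor_def numeral_2_eq_2 mat_delete_def char_poly_matrix_def
        sum.atLeast0_lessThan_Suc det_single algebra_simps)
qed

lemma jac_block_triangular:
  assumes "p0 P \<noteq> 0" "p_Tmax P \<noteq> 0" "p_rT P \<noteq> 0"
  shows "jac P = four_block_mat (mat 1 1 (\<lambda>_. - complex_of_real (a11 P)))
     (mat 1 2 (\<lambda>(_, j). complex_of_real (d1 P 0 (Suc j)))) (0\<^sub>m 2 1)
     (mat 2 2 (\<lambda>(i, j). complex_of_real (d1 P (Suc i) (Suc j))))"
  using d1_entries[OF assms]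
  by (intro eq_matI) (auto simp: jac_def less_Suc_eq numeral_3_eq_3 numeral_2_eq_2)

lemma char_poly_jac_R0_eq_1:
  assumes "p0 P \<noteq> 0" "p_Tmax P \<noteq> 0" "p_rT P \<noteq> 0" "R0 P = 1"
  shows "char_poly (jac P) =
    [:of_real (a11 P), 1:] * ([:0, 1:] * [:of_real (p_b P + p_c P + infected_decay P), 1:])"
proof -
  have "p_b P * p_rho P * p_Rstar P = (p_b P + p_c P) * infected_decay P"
    using assms(4) by (simp add: R0_def infected_decay_def divide_eq_1_iff)
  then have "char_poly (mat 2 2 (\<lambda>(i, j). complex_of_real (d1 P (Suc i) (Suc j)))) =
      [:0, 1:] * [:of_real (p_b P + p_c P + infected_decay P), 1:]"
    by (subst char_poly_2x2)
      (auto simp: d1_entries[OF assms(1-3), unfolded numeral_2_eq_2 One_nat_def] numeral_2_eq_2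
        algebra_simps simp flip: of_real_mult of_real_add)
  moreover have "char_poly (mat 1 1 (\<lambda>_. - complex_of_real (a11 P))) = [:of_real (a11 P), 1:]"
    by (simp add: char_poly_defs det_single)
  ultimately show ?thesis
    unfolding jac_block_triangular[OF assms(1-3)]
    by (subst char_poly_four_block_zeros_col) auto
qed

lemma spectral_cond_if_char_poly:
  assumes "char_poly (jac P) = [:of_real \<alpha>, 1:] * ([:0, 1:] * [:of_real \<beta>, 1:])"
    and "\<alpha> > 0" "\<beta> > 0"
  shows "spectral_cond P"
proof -
  have "order 0 (char_poly (jac P)) =
      order 0 [:complex_of_real \<alpha>, 1:] + (order 0 [:0, 1 :: complex:] + order 0 [:complex_of_real \<beta>, 1:])"
  proof -
    have nz: "[:complex_of_real \<alpha>, 1:] * ([:0, 1:] * [:complex_of_real \<beta>, 1:]) \<noteq> 0"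
      "[:0, 1:] * [:complex_of_real \<beta>, 1:] \<noteq> 0"
      by simp_all
    show ?thesis
      unfolding assms(1) order_mult[OF nz(1)] order_mult[OF nz(2)] ..
  qed
  also have "\<dots> = 1"
    using assms(2,3) order_power_n_n[of "0::complex" 1] by (simp add: order_0I)
  finally have "order 0 (char_poly (jac P)) = 1" .
  moreover have "Re z < 0" if "poly (char_poly (jac P)) z = 0" "z \<noteq> 0" for z
  proof -
    have "poly [:complex_of_real \<alpha>, 1:] z * (poly [:0, 1:] z * poly [:complex_of_real \<beta>, 1:] z) = 0"
      using that(1) unfolding assms(1) poly_mult .
    then have "z = - of_real \<alpha> \<or> z = - of_real \<beta>"
      using that(2) by (auto simp: add_eq_0_iff)
    then show ?thesis
      using assms(2,3) by auto
  qed
  ultimately show ?thesis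
    unfolding spectral_cond_def by blast
qed

lemma rhs_hess_dfe_bilinear:
  "(\<Sum>j<3. \<Sum>k<3. w j * w k * rhs_hess_dfe P i (unitv j) (unitv k)) = rhs_hess_dfe P i w w"
  by (cases "i = 0"; cases "i = 1")
    (simp_all add: eval_nat_numeral unitv_def rhs_hess_dfe_def Let_def divide_inverse algebra_simps)

lemma coef_a_eq:
  assumes "p0 P \<noteq> 0" "p_Tmax P \<noteq> 0"
  shows "coef_a P = - (p_b P + p_c P) * p_rI P * wvec P 1 * (wvec P 0 + wvec P 1) / p_Tmax P
                    - p_b P * p_c P * wvec P 1 * wvec P 2 / p0 P"
proof -
  have "coef_a P = 1/2 * (\<Sum>i<3. vvec P i * rhs_hess_dfe P i (wvec P) (wvec P))"
    unfolding coef_a_def d2_eq_rhs_hess_dfe[OF assms] rhs_hess_dfe_bilinear[symmetric]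
    by (simp only: sum_distrib_left mult.assoc)
  also have "\<dots> = 1/2 * ((p_b P + p_c P) * rhs_hess_dfe P 1 (wvec P) (wvec P)
                          + p_b P * rhs_hess_dfe P 2 (wvec P) (wvec P))"
    by (simp add: eval_nat_numeral vvec_def)
  also have "\<dots> = - (p_b P + p_c P) * p_rI P * wvec P 1 * (wvec P 0 + wvec P 1) / p_Tmax P
                    - p_b P * p_c P * wvec P 1 * wvec P 2 / p0 P"
    using assms by (simp add: rhs_hess_dfe_def Let_def field_simps)
  finally show ?thesis .
qed

lemma coef_b_eq:
  assumes "p0 P \<noteq> 0" "p_Tmax P \<noteq> 0"
  shows "coef_b P = p_b P * p_Rstar P * wvec P 1"
  by (simp add: coef_b_def d2rho_eq[OF assms] eval_nat_numeral vvec_def unitv_def)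

lemma a11_pos: "par_pos P \<Longrightarrow> a11 P > 0"
  unfolding a11_def par_pos_def
  by (intro real_sqrt_gt_zero add_nonneg_pos) auto

lemma p0_pos:
  assumes "par_pos P"
  shows "p0 P > 0"
proof -
  have "\<bar>p_rT P - p_d P\<bar> = sqrt ((p_rT P - p_d P)\<^sup>2)"
    by simp
  also have "\<dots> < a11 P"
    using assms unfolding a11_def par_pos_def by (intro real_sqrt_less_mono) simp
  finally have "p_rT P - p_d P + a11 P > 0"
    by linarith
  then show ?thesis
    using assms unfolding p0_def par_pos_def by simp
qed

lemma bif_hyps_if_R0_eq_1:
  assumes "par_pos P" "infected_decay P > 0" "R0 P = 1"
  shows "bif_hyps P"
proof -
  have p0: "p0 P \<noteq> 0" and Tmax: "p_Tmax P \<noteq> 0" and rT: "p_rT P \<noteq> 0"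
    using assms(1) p0_pos[OF assms(1)] unfolding par_pos_def by auto
  have "spectral_cond P"
    using a11_pos[OF assms(1)] assms(1,2) unfolding par_pos_def
    by (intro spectral_cond_if_char_poly[OF char_poly_jac_R0_eq_1[OF p0 Tmax rT assms(3)]]) auto
  moreover have "coef_b P > 0"
    using a11_pos[OF assms(1)] assms(1) unfolding coef_b_eq[OF p0 Tmax] par_pos_def
    by (simp add: wvec_def)
  ultimately show ?thesis
    using assms unfolding bif_hyps_def infected_decay_def by simp
qed

(* Here p0 = 1/2 and a11 = 1, and delta = 1 + r/2 keeps infected_decay = 1 for every r_I = r,
   so R0 = 1 throughout while a = 4 r - 8 changes sign at r = 2. *)
definition example_par :: "real \<Rightarrow> par" where
  "example_par r = \<lparr>p_s = 1/4, p_rT = 1, p_Tmax = 1, p_d = 1, p_b = 1, p_rI = r,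
     p_delta = 1 + r/2, p_rho = 2, p_Rstar = 1, p_c = 1\<rparr>"

lemma example_par_simps [simp]:
  "p_s (example_par r) = 1/4" "p_rT (example_par r) = 1" "p_Tmax (example_par r) = 1"
  "p_d (example_par r) = 1" "p_b (example_par r) = 1" "p_rI (example_par r) = r"
  "p_delta (example_par r) = 1 + r/2" "p_rho (example_par r) = 2"
  "p_Rstar (example_par r) = 1" "p_c (example_par r) = 1"
  by (simp_all add: example_par_def)

lemma a11_example_par [simp]: "a11 (example_par r) = 1"
  by (simp add: a11_def)

lemma p0_example_par [simp]: "p0 (example_par r) = 1/2"
  by (simp add: p0_def)

lemma bif_hyps_example_par: "r > 0 \<Longrightarrow> bif_hyps (example_par r)"
  by (intro bif_hyps_if_R0_eq_1) (simp_all add: par_pos_def infected_decay_def R0_def)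

lemma coef_a_example_par: "coef_a (example_par r) = 4 * r - 8"
  by (simp add: coef_a_eq wvec_def a12_def)

theorem theorem3:
  shows "(\<exists>P. bif_hyps P \<and> coef_a P > 0) \<and> (\<exists>P. bif_hyps P \<and> coef_a P < 0)"
proof
  show "\<exists>P. bif_hyps P \<and> coef_a P > 0"
    using bif_hyps_example_par[of 10] coef_a_example_par[of 10] by auto
  show "\<exists>P. bif_hyps P \<and> coef_a P < 0"
    using bif_hyps_example_par[of 1] coef_a_example_par[of 1] by auto
qed

end
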